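(* Assume the refinement setting of the context, and assume $F(u)=u$, $G(u)=u$, $p\cap\overline{q}\subseteq F(p\cup q)$, $p\cap\overline{q}\subseteq\mathrm{grd}(G)$ and $p\cap\overline{q}\subseteq G(q)$. Let $p'=r^{-1}[p]$ and $q'=r^{-1}[q]$. Then $p'\cup q'\subseteq{\cal L}(X'(q'))(q')$, where ${\cal L}(X'(q'))(s)$ denotes the greatest fixpoint of the monotone map $Y\mapsto q'\cup\big(G'(s)\cap F'(Y)\cap H(Y)\big)$ on $\mathbb{P}(v)$ (the liberal set transformer of the concrete fair iteration $X'(q')=\overline{q'}\Longrightarrow(((F'\sqcap H);X'(q'))\mathrel{\triangledown} G')$).
   Context: Refinement setting: $u$ (abstract states) and $v$ (concrete states) are sets; $F,G$ are conjunctive set transformers on $u$ and $F',G',H$ conjunctive set transformers on $v$ (conjunctive = preserves intersections of nonempty families of subsets, hence monotone). $\mathrm{grd}(E)=\overline{E(\varnothing)}$. $r\subseteq v\times u$ is a total relation (every $y\in v$ is related to some $x\in u$). For $a\subseteq v$, $r[a]=\{x\in u\mid\exists y\in a,(y,x)\in r\}$; for $b\subseteq u$, $r^{-1}[b]=\{y\in v\mid\exists x\in b,(y,x)\in r\}$. Complements $\overline{\cdot}$ are taken in $u$ for subsets of $u$ and in $v$ for subsets of $v$. The refinement conditions are: for all $s\subseteq v$, $F(\overline{r[\overline{s}]})\subseteq\overline{r[\overline{F'(s)}]}$, $G(\overline{r[\overline{s}]})\subseteq\overline{r[\overline{G'(s)}]}$, and $\overline{r[\overline{s}]}\subseteq\overline{r[\overline{H(s)}]}$.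 $p,q\subseteq u$. The choice $F'\sqcap H$ is $s\mapsto F'(s)\cap H(s)$. *)

theory Defs
  imports Main
begin

text \<open>Conjunctive set transformer: preserves intersections of nonempty families.
  The state spaces u, v are modelled as the universes of types 'a, 'b.\<close>
definition conjunctive :: "('a set \<Rightarrow> 'a set) \<Rightarrow> bool" where
  "conjunctive F \<longleftrightarrow> (\<forall>S::'a set set. S \<noteq> {} \<longrightarrow> F (\<Inter>S) = (\<Inter>X\<in>S. F X))"

definition grd :: "('a set \<Rightarrow> 'a set) \<Rightarrow> 'a set" where
  "grd E = - E {}"

end

theory Submission
  imports Defs
begin

text \<open>The concrete states related to p or q already form a post-fixpoint of the map
  whose greatest fixpoint is taken, so they lie below it. For a concrete state related to
  an abstract state in p - q, the refinement conditions (for H with the identity as abstract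
  transformer) turn the abstract facts G q, F (p \<union> q) and p \<union> q into the concrete ones.\<close>

lemma conjunctive_mono:
  assumes "conjunctive F"
  shows "mono F"
proof (rule monoI)
  fix A B :: "'a set"
  assume "A \<subseteq> B"
  then have "\<Inter>{A, B} = A" by auto
  moreover have "F (\<Inter>{A, B}) = F A \<inter> F B"
    using assms[unfolded conjunctive_def, rule_format, of "{A, B}"] by simp
  ultimately show "F A \<subseteq> F B" by auto
qed

text \<open>- (r `` - s) is the set of abstract states all of whose concrete representatives
  lie in s.\<close>

lemma refinement_Image_converse:
  assumes "mono F"
    and refines: "\<forall>s. F (- (r `` (- s))) \<subseteq> - (r `` (- F' s))"
    and "x \<in> F A" and "(y, x) \<in> r"
  shows "y \<in> F' (r\<inverse> `` A)"
proof -
  have "A \<subseteq> - (r `` (- (r\<inverse> `` A)))" by blast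
  then have "F A \<subseteq> - (r `` (- F' (r\<inverse> `` A)))"
    using \<open>mono F\<close> refines by (meson monoD order_trans)
  then show ?thesis using assms(3,4) by blast
qed

theorem lemma5:
  fixes F G :: "'a set \<Rightarrow> 'a set"
    and F' G' H :: "'b set \<Rightarrow> 'b set"
    and r :: "('b \<times> 'a) set"
    and p q :: "'a set"
  assumes "conjunctive F" and "conjunctive G"
    and "conjunctive F'" and "conjunctive G'" and "conjunctive H"
    and total: "\<forall>y. \<exists>x. (y, x) \<in> r"
    and refF: "\<forall>s. F (- (r `` (- s))) \<subseteq> - (r `` (- F' s))"
    and refG: "\<forall>s. G (- (r `` (- s))) \<subseteq> - (r `` (- G' s))"
    and refH: "\<forall>s. - (r `` (- s)) \<subseteq> - (r `` (- H s))"
    and "F UNIV = UNIV" and "G UNIV = UNIV"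
    and "p \<inter> - q \<subseteq> F (p \<union> q)"
    and "p \<inter> - q \<subseteq> grd G"
    and "p \<inter> - q \<subseteq> G q"
  shows "(r\<inverse> `` p) \<union> (r\<inverse> `` q)
           \<subseteq> gfp (\<lambda>Y. (r\<inverse> `` q) \<union> (G' (r\<inverse> `` q) \<inter> F' Y \<inter> H Y))"
proof (rule gfp_upperbound, rule subsetI)
  let ?Y = "(r\<inverse> `` p) \<union> (r\<inverse> `` q)"
  have Y_eq: "?Y = r\<inverse> `` (p \<union> q)" by (rule Image_Un [symmetric])
  have "mono F" "mono G"
    using \<open>conjunctive F\<close> \<open>conjunctive G\<close> by (simp_all add: conjunctive_mono)
  fix y
  assume "y \<in> ?Y"
  show "y \<in> (r\<inverse> `` q) \<union> (G' (r\<inverse> `` q) \<inter> F' ?Y \<inter> H ?Y)"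
  proof (cases "y \<in> r\<inverse> `` q")
    case False
    with \<open>y \<in> ?Y\<close> obtain x where "(y, x) \<in> r" "x \<in> p \<inter> - q" by blast
    have "y \<in> G' (r\<inverse> `` q)"
      using \<open>x \<in> p \<inter> - q\<close> \<open>p \<inter> - q \<subseteq> G q\<close>
      by (blast intro: refinement_Image_converse[OF \<open>mono G\<close> refG _ \<open>(y, x) \<in> r\<close>])
    moreover have "y \<in> F' ?Y"
      unfolding Y_eq using \<open>x \<in> p \<inter> - q\<close> \<open>p \<inter> - q \<subseteq> F (p \<union> q)\<close>
      by (blast intro: refinement_Image_converse[OF \<open>mono F\<close> refF _ \<open>(y, x) \<in> r\<close>])
    moreover have "y \<in> H ?Y"
      unfolding Y_eq using refinement_Image_converse[of id r H x "p \<union> q" y] refH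
        \<open>(y, x) \<in> r\<close> \<open>x \<in> p \<inter> - q\<close> by (simp add: mono_def)
    ultimately show ?thesis by blast
  qed blast
qed

end
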